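(* Suppose Assumptions A(b)–A(c) hold (and the ADMM iterates are well defined). Let $\{(x^r,y^r)\}$ be generated by the ADMM algorithm. Then there exists a constant $\sigma>0$, independent of $y^r$, such that $$\|\tilde\nabla_x L(x^r;y^r)\|\le\sigma\|x^{r+1}-x^r\|\qquad\text{for all } r\ge1.$$
   Context: Let $x=(x_1^T,\dots,x_K^T)^T\in\mathbb{R}^n$ be partitioned into blocks, $E=(E_1,\dots,E_K)\in\mathbb{R}^{m\times n}$ partitioned accordingly, $q\in\mathbb{R}^m$, $X=\prod_kX_k$. Objective $f(x)=\sum_kf_k(x_k)$ with (A(b)) $f_k(x_k)=g_k(A_kx_k)+h_k(x_k)$, $g_k,h_k$ convex and continuous on their domains, $A_k$ given matrices; (A(c)) each $g_k$ is strictly convex and continuously differentiable on the interior of its domain and there is $L>0$ with $\|A_k^T\nabla g_k(A_kx_k)-A_k^T\nabla g_k(A_kx_k')\|\le L\|x_k-x_k'\|$ for all $x_k,x_k'\in X_k$. The constraint $x_k\in X_k$ is absorbed into $h_k$ via its indicator function; $h(x)=\sum_kh_k(x_k)$, $g(Ax)=\sum_kg_k(A_kx_k)$. For $\rho>0$, $L(x;y)=f(x)+\langle y,q-Ex\rangle+\frac{\rho}{2}\|q-Ex\|^2$. $\mathrm{prox}_h(v)=\arg\min_u h(u)+\frac12\|v-u\|^2$; the proximal gradient is $\tilde\nabla_xL(x;y)=x-\mathrm{prox}_h\big(x-A^T\nabla g(Ax)+E^Ty-\rho E^T(Ex-q)\big)$, where $A^T\nabla g(Ax)$ has blocks $A_k^T\nabla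 g_k(A_kx_k)$. ADMM with dual stepsize $\alpha>0$: from $(x^0,y^0)$, for $r=0,1,\dots$, compute for $k=1,\dots,K$ in order $x_k^{r+1}=\arg\min_{x_k\in X_k}L(x_1^{r+1},\dots,x_{k-1}^{r+1},x_k,x_{k+1}^r,\dots,x_K^r;y^r)$, then $y^{r+1}=y^r+\alpha(q-Ex^{r+1})$. *)

theory Defs
  imports "HOL-Analysis.Analysis"
begin

text \<open>The variable x lives in real^'n; coordinate i belongs to
  block blk i (blocks are numbered 0..K-1).  Similarly the range space of the A_k is real^'p with
  row blocks given by blkp.\<close>

definition bproj :: "('n \<Rightarrow> nat) \<Rightarrow> nat \<Rightarrow> real^'n \<Rightarrow> real^'n" where
  "bproj blk k x = (\<chi> i. if blk i = k then x $ i else 0)"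

text \<open>The point (a_1,...,a_{k-1}, u_k, b_{k+1},...,b_K) of the Gauss-Seidel sweep.\<close>
definition gs_point :: "('n \<Rightarrow> nat) \<Rightarrow> nat \<Rightarrow> real^'n \<Rightarrow> real^'n \<Rightarrow> real^'n \<Rightarrow> real^'n" where
  "gs_point blk k a u b = (\<chi> i. if blk i < k then a $ i else if blk i = k then u $ i else b $ i)"

text \<open>Diagonal blocks of A: A_k x_k and A_k^T w_k.\<close>
definition Ablk :: "('n \<Rightarrow> nat) \<Rightarrow> ('p \<Rightarrow> nat) \<Rightarrow> real^'n^'p \<Rightarrow> nat \<Rightarrow> real^'n \<Rightarrow> real^'p" where
  "Ablk blk blkp A k x = bproj blkp k (A *v bproj blk k x)"

definition AblkT :: "('n \<Rightarrow> nat) \<Rightarrow> ('p \<Rightarrow> nat) \<Rightarrow> real^'n^'p \<Rightarrow> nat \<Rightarrow> real^'p \<Rightarrow> real^'n" where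
  "AblkT blk blkp A k w = bproj blk k (transpose A *v bproj blkp k w)"

definition strictly_convex_on :: "'a::real_vector set \<Rightarrow> ('a \<Rightarrow> real) \<Rightarrow> bool" where
  "strictly_convex_on S f \<longleftrightarrow>
     (\<forall>x\<in>S. \<forall>y\<in>S. \<forall>t. x \<noteq> y \<and> 0 < t \<and> t < 1 \<longrightarrow>
        f ((1 - t) *\<^sub>R x + t *\<^sub>R y) < (1 - t) * f x + t * f y)"

definition prox :: "'a::real_normed_vector set \<Rightarrow> ('a \<Rightarrow> real) \<Rightarrow> 'a \<Rightarrow> 'a" where
  "prox D h v = (THE u. u \<in> D \<and>
      (\<forall>w\<in>D. h u + (norm (v - u))\<^sup>2 / 2 \<le> h w + (norm (v - w))\<^sup>2 / 2))"

text \<open>Effective domain of h(x) = sum_k h_k(x_k) (constraints X_k absorbed) and h itself.\<close>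
definition hdom :: "('n \<Rightarrow> nat) \<Rightarrow> nat \<Rightarrow> (nat \<Rightarrow> (real^'n) set) \<Rightarrow> (nat \<Rightarrow> (real^'n) set)
                    \<Rightarrow> (real^'n) set" where
  "hdom blk K Dh X = {x. \<forall>k<K. bproj blk k x \<in> Dh k \<inter> X k}"

definition hsum :: "('n \<Rightarrow> nat) \<Rightarrow> nat \<Rightarrow> (nat \<Rightarrow> real^'n \<Rightarrow> real) \<Rightarrow> real^'n \<Rightarrow> real" where
  "hsum blk K h x = (\<Sum>k<K. h k (bproj blk k x))"

text \<open>A^T grad g(Ax): block k equals A_k^T grad g_k(A_k x_k).\<close>
definition gradg :: "('n \<Rightarrow> nat) \<Rightarrow> ('p \<Rightarrow> nat) \<Rightarrow> nat \<Rightarrow> real^'n^'p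
                      \<Rightarrow> (nat \<Rightarrow> real^'p \<Rightarrow> real^'p) \<Rightarrow> real^'n \<Rightarrow> real^'n" where
  "gradg blk blkp K A dg x = (\<Sum>k<K. AblkT blk blkp A k (dg k (Ablk blk blkp A k x)))"

definition aug_lag :: "('n \<Rightarrow> nat) \<Rightarrow> ('p \<Rightarrow> nat) \<Rightarrow> nat \<Rightarrow> real^'n^'p
      \<Rightarrow> (nat \<Rightarrow> real^'p \<Rightarrow> real) \<Rightarrow> (nat \<Rightarrow> real^'n \<Rightarrow> real)
      \<Rightarrow> real^'n^'m \<Rightarrow> real^'m \<Rightarrow> real \<Rightarrow> real^'n \<Rightarrow> real^'m \<Rightarrow> real" where
  "aug_lag blk blkp K A g h E q \<rho> x y =
     (\<Sum>k<K. g k (Ablk blk blkp A k x) + h k (bproj blk k x))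
     + y \<bullet> (q - E *v x) + \<rho> / 2 * (norm (q - E *v x))\<^sup>2"

definition prox_grad :: "('n \<Rightarrow> nat) \<Rightarrow> ('p \<Rightarrow> nat) \<Rightarrow> nat \<Rightarrow> real^'n^'p
      \<Rightarrow> (nat \<Rightarrow> real^'p \<Rightarrow> real^'p) \<Rightarrow> (nat \<Rightarrow> real^'n \<Rightarrow> real)
      \<Rightarrow> (nat \<Rightarrow> (real^'n) set) \<Rightarrow> (nat \<Rightarrow> (real^'n) set)
      \<Rightarrow> real^'n^'m \<Rightarrow> real^'m \<Rightarrow> real \<Rightarrow> real^'n \<Rightarrow> real^'m \<Rightarrow> real^'n" where
  "prox_grad blk blkp K A dg h Dh X E q \<rho> x y =
     x - prox (hdom blk K Dh X) (hsum blk K h)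
           (x - gradg blk blkp K A dg x + transpose E *v y - \<rho> *\<^sub>R (transpose E *v (E *v x - q)))"

definition admm_seq where
  "admm_seq blk blkp K A g h Dh X E q \<rho> \<alpha> (x :: nat \<Rightarrow> real^'n) (y :: nat \<Rightarrow> real^'m) \<longleftrightarrow>
     (\<forall>r. \<forall>k<K.
        bproj blk k (x (Suc r)) \<in> Dh k \<inter> X k \<and>
        (\<forall>u. bproj blk k u \<in> Dh k \<inter> X k \<longrightarrow>
           aug_lag blk blkp K A g h E q \<rho> (gs_point blk k (x (Suc r)) (x (Suc r)) (x r)) (y r)
           \<le> aug_lag blk blkp K A g h E q \<rho> (gs_point blk k (x (Suc r)) u (x r)) (y r))) \<and>
     (\<forall>r. y (Suc r) = y r + \<alpha> *\<^sub>R (q - E *v x (Suc r)))"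

end

theory Submission
  imports Defs
begin

(* Fix an iteration r >= 1, write a = x^(r+1), b = x^r and let v = b - grad_s(b) be the forward step,
   where grad_s is the gradient of the smooth part of the augmented Lagrangian, so that the proximal
   gradient equals b - p with p = prox_h(v).
   (1) Convex analysis: a minimiser of "smooth + convex" over a convex set satisfies a first-order
       variational inequality; for the prox this gives 0 <= h(w) - h(p) + <p - v, w - p>.
   (2) Each ADMM subproblem is such a minimisation in block k.  Summing over the blocks, a satisfies
       0 <= h(w) - h(a) + <G, w - a>, where G is the smooth gradient taken block by block at the
       intermediate Gauss-Seidel points.
   (3) Comparing the two inequalities (with w = a and w = p) gives |p - a| <= |G + v - a|, and by the
       Lipschitz assumption A(c) together with the bound |E^T E z| <= B0 |z| one gets
       |G + v - a| <= (1 + K (L + rho B0)) |a - b|.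
   Hence |prox gradient| <= |a - b| + |p - a| <= (2 + K (L + rho B0)) |a - b|; the constant does not
   depend on the multipliers y^r. *)

lemma first_order_optimality:
  fixes \<phi> \<psi> :: "'a::real_normed_vector \<Rightarrow> real"
  assumes S: "convex S" and \<psi>: "convex_on S \<psi>" and u: "u \<in> S" and w: "w \<in> S"
    and min: "\<And>v. v \<in> S \<Longrightarrow> \<phi> u + \<psi> u \<le> \<phi> v + \<psi> v"
    and deriv: "(\<phi> has_derivative \<phi>') (at u)"
  shows "0 \<le> \<psi> w - \<psi> u + \<phi>' (w - u)"
proof -
  define \<gamma> where "\<gamma> t = \<phi> (u + t *\<^sub>R (w - u))" for t :: real
  have lin: "linear \<phi>'" using deriv by (simp add: has_derivative_linear)
  have "((\<lambda>t. u + t *\<^sub>R (w - u)) has_derivative (\<lambda>t. t *\<^sub>R (w - u))) (at 0 within {0<..})"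
    by (auto intro!: derivative_eq_intros)
  from has_derivative_compose[OF this] deriv
  have "(\<gamma> has_derivative (\<lambda>t. \<phi>' (t *\<^sub>R (w - u)))) (at 0 within {0<..})"
    unfolding \<gamma>_def by simp
  moreover have "(\<lambda>t. \<phi>' (t *\<^sub>R (w - u))) = (*) (\<phi>' (w - u))"
    using lin by (auto simp: fun_eq_iff linear_scale mult.commute)
  ultimately have "(\<gamma> has_field_derivative \<phi>' (w - u)) (at 0 within {0<..})"
    by (simp add: has_field_derivative_def)
  then have "((\<lambda>t. (\<gamma> t - \<gamma> 0) / (t - 0)) \<longlongrightarrow> \<phi>' (w - u)) (at_right 0)"
    by (simp add: has_field_derivative_iff)
  then have lim: "((\<lambda>t. \<psi> w - \<psi> u + (\<gamma> t - \<gamma> 0) / t) \<longlongrightarrow> \<psi> w - \<psi> u + \<phi>' (w - u)) (at_right 0)"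
    by (auto intro!: tendsto_intros)
  \<comment> \<open>Moving from u a step t towards w cannot decrease the objective.\<close>
  have quotient: "0 \<le> \<psi> w - \<psi> u + (\<gamma> t - \<gamma> 0) / t" if t: "0 < t" "t < 1" for t
  proof -
    have conv: "u + t *\<^sub>R (w - u) = (1 - t) *\<^sub>R u + t *\<^sub>R w" by (simp add: algebra_simps)
    have "\<phi> u + \<psi> u \<le> \<gamma> t + \<psi> ((1 - t) *\<^sub>R u + t *\<^sub>R w)"
      using min[of "(1 - t) *\<^sub>R u + t *\<^sub>R w"] convexD[OF S u w, of "1 - t" t] t
      unfolding \<gamma>_def conv by simp
    also have "\<dots> \<le> \<gamma> t + ((1 - t) * \<psi> u + t * \<psi> w)"
      using convex_onD[OF \<psi>, of t u w] u w t by simp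
    finally have "0 \<le> t * (\<psi> w - \<psi> u) + (\<gamma> t - \<gamma> 0)"
      unfolding \<gamma>_def by (simp add: algebra_simps)
    then have "0 \<le> (t * (\<psi> w - \<psi> u) + (\<gamma> t - \<gamma> 0)) / t" using t by simp
    then show ?thesis using t by (simp add: add_divide_distrib)
  qed
  have "eventually (\<lambda>t. t \<in> {0<..<(1::real)}) (at_right 0)"
    by (rule eventually_at_right_real) simp
  then have "eventually (\<lambda>t. 0 \<le> \<psi> w - \<psi> u + (\<gamma> t - \<gamma> 0) / t) (at_right (0::real))"
    by (rule eventually_mono) (use quotient in auto)
  from tendsto_lowerbound[OF lim this] show ?thesis by simp
qed

lemma has_derivative_half_dist_sq:
  fixes x :: "'a::real_inner"
  shows "((\<lambda>v. (norm (x - v))\<^sup>2 / 2) has_derivative (\<lambda>d. inner (u - x) d)) (at u)"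
proof -
  have "((\<lambda>v. inner (x - v) (x - v) / 2) has_derivative
          (\<lambda>d. (inner (x - u) (- d) + inner (- d) (x - u)) / 2)) (at u)"
    by (auto intro!: derivative_eq_intros)
  moreover have "(\<lambda>d. (inner (x - u) (- d) + inner (- d) (x - u)) / 2) = (\<lambda>d. inner (u - x) d)"
    by (auto simp: fun_eq_iff inner_commute inner_diff_left inner_diff_right)
  ultimately show ?thesis by (simp add: power2_norm_eq_inner)
qed

text \<open>Characterisation of the proximal point: a minimiser of H + |v - .|^2/2 over D is unique, so
  prox picks it, and it satisfies the first-order variational inequality.\<close>

lemma prox_vi:
  fixes v :: "'a::real_inner"
  assumes D: "convex D" and H: "convex_on D H"
    and ex: "\<exists>u\<in>D. \<forall>w\<in>D. H u + (norm (v - u))\<^sup>2 / 2 \<le> H w + (norm (v - w))\<^sup>2 / 2"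
  shows "prox D H v \<in> D"
    and "\<And>w. w \<in> D \<Longrightarrow> 0 \<le> H w - H (prox D H v) + inner (prox D H v - v) (w - prox D H v)"
proof -
  let ?P = "\<lambda>u. u \<in> D \<and> (\<forall>w\<in>D. H u + (norm (v - u))\<^sup>2 / 2 \<le> H w + (norm (v - w))\<^sup>2 / 2)"
  have vi: "0 \<le> H w - H u + inner (u - v) (w - u)" if "?P u" "w \<in> D" for u w
    using first_order_optimality[OF D H _ \<open>w \<in> D\<close> _ has_derivative_half_dist_sq[of v u]] that
    by (simp add: add.commute)
  \<comment> \<open>Adding the inequalities of two minimisers shows that their squared distance is nonpositive.\<close>
  have unique: "u1 = u2" if "?P u1" "?P u2" for u1 u2
  proof -
    have "0 \<le> inner (u1 - v) (u2 - u1) + inner (u2 - v) (u1 - u2)"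
      using vi[of u1 u2] vi[of u2 u1] that by linarith
    also have "\<dots> = - inner (u1 - u2) (u1 - u2)"
      by (simp add: inner_diff_left inner_diff_right inner_commute)
    finally have "inner (u1 - u2) (u1 - u2) \<le> 0" by simp
    then have "inner (u1 - u2) (u1 - u2) = 0" using inner_ge_zero[of "u1 - u2"] by linarith
    then show ?thesis by simp
  qed
  obtain u where u: "?P u" using ex by blast
  have "prox D H v = u"
    unfolding prox_def using u unique by (intro the_equality) blast+
  then show "prox D H v \<in> D"
    and "\<And>w. w \<in> D \<Longrightarrow> 0 \<le> H w - H (prox D H v) + inner (prox D H v - v) (w - prox D H v)"
    using u vi by auto
qed

lemma norm_le_of_inner_le:
  fixes e c :: "'a::real_inner"
  assumes "inner e e \<le> inner c e"
  shows "norm e \<le> norm c"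
proof (cases "e = 0")
  case False
  have "norm e * norm e \<le> norm c * norm e"
    using assms norm_cauchy_schwarz[of c e] by (simp add: power2_eq_square[symmetric] power2_norm_eq_inner)
  then show ?thesis using False by simp
qed simp

lemma distance_bound_from_vis:
  fixes p z v G :: "'a::real_inner"
  assumes prox: "0 \<le> H z - H p + inner (p - v) (z - p)"
    and approx: "0 \<le> H p - H z + inner G (p - z)"
  shows "norm (p - z) \<le> norm (G + v - z)"
proof (rule norm_le_of_inner_le)
  have "inner (p - v) (z - p) + inner G (p - z) = inner (G + v - z) (p - z) - inner (p - z) (p - z)"
    by (simp add: inner_diff_left inner_diff_right inner_add_left inner_add_right inner_commute)
  then show "inner (p - z) (p - z) \<le> inner (G + v - z) (p - z)"
    using prox approx by linarith
qed

lemma convex_on_linear_vimage: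
  fixes L :: "'a::real_vector \<Rightarrow> 'b::real_vector"
  assumes L: "linear L" and f: "convex_on S f"
  shows "convex_on (L -` S) (\<lambda>x. f (L x))"
proof (rule convex_onI)
  show "convex (L -` S)" by (rule convex_linear_vimage[OF L convex_on_imp_convex[OF f]])
  fix t :: real and x y assume "0 < t" "t < 1" "x \<in> L -` S" "y \<in> L -` S"
  then show "f (L ((1 - t) *\<^sub>R x + t *\<^sub>R y)) \<le> (1 - t) * f (L x) + t * f (L y)"
    using convex_onD[OF f, of t "L x" "L y"] by (simp add: linear_add[OF L] linear_scale[OF L])
qed

lemma convex_on_sum_fun:
  assumes "finite I" "convex T" "\<And>i. i \<in> I \<Longrightarrow> convex_on T (f i)"
  shows "convex_on T (\<lambda>x. \<Sum>i\<in>I. f i x)"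
  using assms by (induction I rule: finite_induct) (auto simp: convex_on_const)

lemma bproj_add: "bproj blk k (a + b) = bproj blk k a + bproj blk k b"
  by (simp add: bproj_def vec_eq_iff)

lemma bproj_diff: "bproj blk k (a - b) = bproj blk k a - bproj blk k b"
  by (simp add: bproj_def vec_eq_iff)

lemma bproj_scaleR: "bproj blk k (c *\<^sub>R a) = c *\<^sub>R bproj blk k a"
  by (simp add: bproj_def vec_eq_iff)

lemma bproj_bproj: "bproj blk j (bproj blk k a) = (if j = k then bproj blk k a else 0)"
  by (simp add: bproj_def vec_eq_iff)

lemma linear_bproj: "linear (bproj blk k)"
  by (rule linearI) (simp_all add: bproj_add bproj_scaleR)

lemma bounded_linear_bproj: "bounded_linear (bproj blk k :: real^'n \<Rightarrow> real^'n)"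
  using linear_conv_bounded_linear[THEN iffD1, OF linear_bproj] .

lemma bounded_linear_Ablk: "bounded_linear (Ablk blk blkp A k)"
proof -
  have "Ablk blk blkp A k = (\<lambda>x. bproj blkp k ((*v) A (bproj blk k x)))"
    by (simp add: fun_eq_iff Ablk_def)
  then show ?thesis
    using bounded_linear_compose[OF bounded_linear_bproj
        bounded_linear_compose[OF matrix_vector_mul_bounded_linear bounded_linear_bproj]]
    by simp
qed

lemma inner_bproj: "inner (bproj blk k (a::real^'n)) b = inner a (bproj blk k b)"
  unfolding bproj_def inner_vec_def by (auto intro!: sum.cong)

lemma Ablk_bproj: "Ablk blk blkp A k (bproj blk k z) = Ablk blk blkp A k z"
  by (simp add: Ablk_def bproj_bproj)

lemma inner_transpose: "inner (transpose E *v (a::real^'m)) (d::real^'n) = inner a (E *v d)"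
  by (simp add: dot_lmul_matrix)

lemma inner_Ablk:
  "inner (w::real^'p) (Ablk blk blkp A k (d::real^'n)) = inner (AblkT blk blkp A k w) d"
proof -
  have "inner w (Ablk blk blkp A k d) = inner (bproj blkp k w) (A *v bproj blk k d)"
    unfolding Ablk_def by (rule inner_bproj[symmetric])
  also have "\<dots> = inner (transpose A *v bproj blkp k w) (bproj blk k d)"
    by (rule inner_transpose[symmetric])
  also have "\<dots> = inner (AblkT blk blkp A k w) d"
    unfolding AblkT_def by (rule inner_bproj[symmetric])
  finally show ?thesis .
qed

lemma bproj_gradg:
  assumes "k < K"
  shows "bproj blk k (gradg blk blkp K A dg x) = AblkT blk blkp A k (dg k (Ablk blk blkp A k x))"
proof -
  have "bproj blk k (gradg blk blkp K A dg x)
      = (\<Sum>j<K. bproj blk k (AblkT blk blkp A j (dg j (Ablk blk blkp A j x))))"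
    unfolding gradg_def by (simp add: linear_sum[OF linear_bproj] o_def)
  also have "\<dots> = (\<Sum>j<K. if j = k then AblkT blk blkp A k (dg k (Ablk blk blkp A k x)) else 0)"
    by (intro sum.cong) (auto simp: AblkT_def bproj_bproj)
  also have "\<dots> = AblkT blk blkp A k (dg k (Ablk blk blkp A k x))"
    using assms by (simp only: sum.delta finite_lessThan lessThan_iff if_True)
  finally show ?thesis .
qed

lemma bproj_gs_point: "bproj blk k (gs_point blk k a u b) = bproj blk k u"
  by (simp add: bproj_def gs_point_def vec_eq_iff)

lemma bproj_gs_point_other:
  "j \<noteq> k \<Longrightarrow> bproj blk j (gs_point blk k a u b) = bproj blk j (gs_point blk k a a b)"
  by (simp add: bproj_def gs_point_def vec_eq_iff)

lemma gs_point_shift: "gs_point blk k a u b = gs_point blk k a a b + bproj blk k (u - a)"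
  by (simp add: bproj_def gs_point_def vec_eq_iff)

lemma bproj_sum_blocks:
  assumes "\<forall>i. blk i < K"
  shows "(\<Sum>k<K. bproj blk k x) = x"
proof -
  have "(\<Sum>k<K. if blk i = k then x $ i else 0) = x $ i" for i
    using assms by (simp add: sum.delta)
  then show ?thesis by (simp add: bproj_def vec_eq_iff sum_component)
qed

lemma norm_bproj_le: "norm (bproj blk k (a::real^'n)) \<le> norm a"
  by (rule norm_le_componentwise_cart) (simp add: bproj_def)

lemma norm_gs_point_le: "norm (gs_point blk k a a b - b) \<le> norm (a - (b::real^'n))"
  by (rule norm_le_componentwise_cart) (simp add: gs_point_def)

lemma hdom_vimage: "hdom blk K Dh X = (\<Inter>k<K. bproj blk k -` (Dh k \<inter> X k))"
  by (auto simp: hdom_def)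

lemma convex_hsum:
  assumes "\<And>k. k < K \<Longrightarrow> convex_on (Dh k \<inter> X k) (h k)"
  shows "convex (hdom blk K Dh X)" and "convex_on (hdom blk K Dh X) (hsum blk K h)"
proof -
  have block: "convex_on (bproj blk k -` (Dh k \<inter> X k)) (\<lambda>x. h k (bproj blk k x))" if "k < K" for k
    using convex_on_linear_vimage[OF linear_bproj assms[OF that]] .
  show conv: "convex (hdom blk K Dh X)"
    unfolding hdom_vimage using block by (intro convex_INT) (auto dest: convex_on_imp_convex)
  show "convex_on (hdom blk K Dh X) (hsum blk K h)"
    unfolding hsum_def
  proof (rule convex_on_sum_fun[OF finite_lessThan conv])
    fix k assume "k \<in> {..<K}"
    then show "convex_on (hdom blk K Dh X) (\<lambda>x. h k (bproj blk k x))"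
      using convex_on_subset[OF block[of k] _ conv] by (auto simp: hdom_vimage)
  qed
qed

text \<open>Gradient of the smooth part x \<mapsto> g(Ax) + <y, q - Ex> + rho/2 |q - Ex|^2 of the augmented
  Lagrangian; the proximal gradient is x - prox_h(x - smooth_grad x y).\<close>

definition smooth_grad :: "('n \<Rightarrow> nat) \<Rightarrow> ('p \<Rightarrow> nat) \<Rightarrow> nat \<Rightarrow> real^'n^'p
      \<Rightarrow> (nat \<Rightarrow> real^'p \<Rightarrow> real^'p) \<Rightarrow> real^'n^'m \<Rightarrow> real^'m \<Rightarrow> real
      \<Rightarrow> real^'n \<Rightarrow> real^'m \<Rightarrow> real^'n" where
  "smooth_grad blk blkp K A dg E q \<rho> x y =
     gradg blk blkp K A dg x - transpose E *v y + \<rho> *\<^sub>R (transpose E *v (E *v x - q))"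

lemma prox_grad_smooth_grad:
  "prox_grad blk blkp K A dg h Dh X E q \<rho> x y
     = x - prox (hdom blk K Dh X) (hsum blk K h) (x - smooth_grad blk blkp K A dg E q \<rho> x y)"
  unfolding prox_grad_def smooth_grad_def by (simp add: algebra_simps)

text \<open>Block k of the smooth gradient is Lipschitz: Assumption A(c) for g_k, plus the bounded
  operator E^T E for the quadratic penalty.\<close>

lemma smooth_grad_block_lipschitz:
  fixes E :: "real^'n^'m::finite"
  assumes k: "k < K" and \<rho>: "0 \<le> \<rho>" and L: "0 \<le> L"
    and B0: "\<And>w. norm ((transpose E ** E) *v w) \<le> B0 * norm w"
    and lip: "norm (AblkT blk blkp A k (dg k (Ablk blk blkp A k z))
                    - AblkT blk blkp A k (dg k (Ablk blk blkp A k z')))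
              \<le> L * norm (bproj blk k z - bproj blk k z')"
  shows "norm (bproj blk k (smooth_grad blk blkp K A dg E q \<rho> z y - smooth_grad blk blkp K A dg E q \<rho> z' y))
         \<le> (L + \<rho> * B0) * norm (z - z')"
proof -
  let ?dG = "AblkT blk blkp A k (dg k (Ablk blk blkp A k z)) - AblkT blk blkp A k (dg k (Ablk blk blkp A k z'))"
  have "smooth_grad blk blkp K A dg E q \<rho> z y - smooth_grad blk blkp K A dg E q \<rho> z' y
      = gradg blk blkp K A dg z - gradg blk blkp K A dg z' + \<rho> *\<^sub>R ((transpose E ** E) *v (z - z'))"
    unfolding smooth_grad_def
    by (simp del: transpose_matrix_vector add: matrix_vector_mul_assoc[symmetric]
        matrix_vector_mult_diff_distrib algebra_simps)
  then have "bproj blk k (smooth_grad blk blkp K A dg E q \<rho> z y - smooth_grad blk blkp K A dg E q \<rho> z' y)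
      = ?dG + \<rho> *\<^sub>R bproj blk k ((transpose E ** E) *v (z - z'))"
    by (simp add: bproj_add bproj_diff bproj_scaleR bproj_gradg[OF k])
  also have "norm \<dots> \<le> norm ?dG + \<rho> * norm ((transpose E ** E) *v (z - z'))"
    using norm_triangle_ineq norm_bproj_le \<rho>
    by (smt (verit) mult_left_mono norm_scaleR)
  also have "\<dots> \<le> L * norm (z - z') + \<rho> * (B0 * norm (z - z'))"
  proof (rule add_mono)
    show "norm ?dG \<le> L * norm (z - z')"
      using lip mult_left_mono[OF norm_bproj_le[of blk k "z - z'"] L] by (simp add: bproj_diff)
    show "\<rho> * norm ((transpose E ** E) *v (z - z')) \<le> \<rho> * (B0 * norm (z - z'))"
      using B0 \<rho> by (simp add: mult_left_mono)
  qed
  finally show ?thesis by (simp add: algebra_simps)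
qed

lemma aug_lag_gs_point:
  assumes k: "k < K"
  shows "aug_lag blk blkp K A g h E q \<rho> (gs_point blk k a u b) y =
     (\<Sum>j\<in>{..<K} - {k}. g j (Ablk blk blkp A j (gs_point blk k a a b))
                         + h j (bproj blk j (gs_point blk k a a b)))
     + g k (Ablk blk blkp A k u) + h k (bproj blk k u)
     + y \<bullet> (q - E *v gs_point blk k a u b) + \<rho> / 2 * (norm (q - E *v gs_point blk k a u b))\<^sup>2"
proof -
  let ?F = "\<lambda>j z. g j (Ablk blk blkp A j z) + h j (bproj blk j z)"
  have other: "?F j (gs_point blk k a u b) = ?F j (gs_point blk k a a b)" if "j \<noteq> k" for j
    using bproj_gs_point_other[OF that] by (metis Ablk_bproj)
  have own: "?F k (gs_point blk k a u b) = g k (Ablk blk blkp A k u) + h k (bproj blk k u)"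
    by (metis Ablk_bproj bproj_gs_point)
  have "(\<Sum>j<K. ?F j (gs_point blk k a u b))
      = ?F k (gs_point blk k a u b) + (\<Sum>j\<in>{..<K} - {k}. ?F j (gs_point blk k a u b))"
    using k by (simp add: sum.remove)
  also have "\<dots> = g k (Ablk blk blkp A k u) + h k (bproj blk k u)
                  + (\<Sum>j\<in>{..<K} - {k}. ?F j (gs_point blk k a a b))"
    using other own by simp
  finally show ?thesis unfolding aug_lag_def by simp
qed

lemma has_derivative_block_objective:
  fixes blk :: "'n::finite \<Rightarrow> nat" and blkp :: "'p::finite \<Rightarrow> nat"
    and E :: "real^'n^'m::finite"
  assumes k: "k < K"
    and gd: "(g k has_derivative (\<lambda>d. dg k (Ablk blk blkp A k a) \<bullet> d)) (at (Ablk blk blkp A k a))"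
  shows "((\<lambda>u. aug_lag blk blkp K A g h E q \<rho> (gs_point blk k a u b) y - h k (bproj blk k u))
           has_derivative (\<lambda>d. smooth_grad blk blkp K A dg E q \<rho> (gs_point blk k a a b) y \<bullet> bproj blk k d))
         (at a)"
proof -
  define z0 where "z0 = gs_point blk k a a b"
  define r0 where "r0 = q - E *v z0"
  define c where "c = (\<Sum>j\<in>{..<K} - {k}. g j (Ablk blk blkp A j z0) + h j (bproj blk j z0))"
  define r where "r u = r0 - E *v bproj blk k (u - a)" for u
  have r_gs: "q - E *v gs_point blk k a u b = r u" for u
    unfolding r_def r0_def z0_def
    by (subst gs_point_shift) (simp add: matrix_vector_right_distrib)
  have objective: "(\<lambda>u. aug_lag blk blkp K A g h E q \<rho> (gs_point blk k a u b) y - h k (bproj blk k u))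
      = (\<lambda>u. c + g k (Ablk blk blkp A k u) + y \<bullet> r u + \<rho> / 2 * (r u \<bullet> r u))"
    by (simp add: fun_eq_iff aug_lag_gs_point[OF k] c_def z0_def r_gs power2_norm_eq_inner)
  have "bounded_linear (\<lambda>d. E *v bproj blk k d)"
    by (rule bounded_linear_compose[OF matrix_vector_mul_bounded_linear bounded_linear_bproj])
  from has_derivative_diff[OF has_derivative_const bounded_linear_imp_has_derivative[OF this]]
  have "((\<lambda>u. (r0 + E *v bproj blk k a) - E *v bproj blk k u) has_derivative
           (\<lambda>d. 0 - E *v bproj blk k d)) (at a)" .
  moreover have "(\<lambda>u. (r0 + E *v bproj blk k a) - E *v bproj blk k u) = r"
    by (simp add: fun_eq_iff r_def bproj_diff matrix_vector_mult_diff_distrib)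
  ultimately have dr: "(r has_derivative (\<lambda>d. - (E *v bproj blk k d))) (at a)" by simp
  have dg: "((\<lambda>u. g k (Ablk blk blkp A k u)) has_derivative
              (\<lambda>d. dg k (Ablk blk blkp A k a) \<bullet> Ablk blk blkp A k d)) (at a)"
    using has_derivative_compose[OF bounded_linear_imp_has_derivative[OF bounded_linear_Ablk] gd] .
  have dq: "((\<lambda>u. \<rho> / 2 * (r u \<bullet> r u)) has_derivative
      (\<lambda>d. \<rho> / 2 * (r a \<bullet> - (E *v bproj blk k d) + - (E *v bproj blk k d) \<bullet> r a))) (at a)"
    using bounded_linear.has_derivative[OF bounded_linear_mult_right has_derivative_inner[OF dr dr]] .
  have "((\<lambda>u. c + g k (Ablk blk blkp A k u) + y \<bullet> r u + \<rho> / 2 * (r u \<bullet> r u)) has_derivative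
      (\<lambda>d. 0 + dg k (Ablk blk blkp A k a) \<bullet> Ablk blk blkp A k d + y \<bullet> - (E *v bproj blk k d)
           + \<rho> / 2 * (r a \<bullet> - (E *v bproj blk k d) + - (E *v bproj blk k d) \<bullet> r a))) (at a)"
    by (intro has_derivative_add has_derivative_const dg has_derivative_inner_right dr dq)
  moreover have "r a = r0" by (simp add: r_def linear_0[OF linear_bproj])
  ultimately have "((\<lambda>u. c + g k (Ablk blk blkp A k u) + y \<bullet> r u + \<rho> / 2 * (r u \<bullet> r u)) has_derivative
      (\<lambda>d. dg k (Ablk blk blkp A k a) \<bullet> Ablk blk blkp A k d - y \<bullet> (E *v bproj blk k d)
           - \<rho> * (r0 \<bullet> (E *v bproj blk k d)))) (at a)"
    by (simp add: inner_commute algebra_simps)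
  moreover have "dg k (Ablk blk blkp A k a) \<bullet> Ablk blk blkp A k d - y \<bullet> (E *v bproj blk k d)
           - \<rho> * (r0 \<bullet> (E *v bproj blk k d))
      = smooth_grad blk blkp K A dg E q \<rho> z0 y \<bullet> bproj blk k d" for d
  proof -
    have "Ablk blk blkp A k z0 = Ablk blk blkp A k a"
      unfolding z0_def by (metis Ablk_bproj bproj_gs_point)
    then have "gradg blk blkp K A dg z0 \<bullet> bproj blk k d = dg k (Ablk blk blkp A k a) \<bullet> Ablk blk blkp A k d"
      by (simp add: inner_bproj[symmetric] bproj_gradg[OF k] inner_Ablk)
    moreover have "E *v z0 - q = - r0" unfolding r0_def by simp
    ultimately show ?thesis
      unfolding smooth_grad_def
      by (simp del: transpose_matrix_vector add: inner_diff_left inner_add_left inner_transpose)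
  qed
  ultimately show ?thesis unfolding objective z0_def by simp
qed

lemma block_subproblem_vi:
  fixes blk :: "'n::finite \<Rightarrow> nat" and blkp :: "'p::finite \<Rightarrow> nat"
    and E :: "real^'n^'m::finite"
  assumes k: "k < K" and hS: "convex_on S (h k)"
    and a: "bproj blk k a \<in> S" and w: "bproj blk k w \<in> S"
    and minim: "\<And>u. bproj blk k u \<in> S \<Longrightarrow> aug_lag blk blkp K A g h E q \<rho> (gs_point blk k a a b) y
                                         \<le> aug_lag blk blkp K A g h E q \<rho> (gs_point blk k a u b) y"
    and gd: "(g k has_derivative (\<lambda>d. dg k (Ablk blk blkp A k a) \<bullet> d)) (at (Ablk blk blkp A k a))"
  shows "0 \<le> h k (bproj blk k w) - h k (bproj blk k a)
              + smooth_grad blk blkp K A dg E q \<rho> (gs_point blk k a a b) y \<bullet> bproj blk k (w - a)"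
proof -
  let ?\<psi> = "\<lambda>u. h k (bproj blk k u)"
  let ?\<phi> = "\<lambda>u. aug_lag blk blkp K A g h E q \<rho> (gs_point blk k a u b) y - ?\<psi> u"
  have \<psi>: "convex_on (bproj blk k -` S) ?\<psi>"
    by (rule convex_on_linear_vimage[OF linear_bproj hS])
  show ?thesis
  proof (rule first_order_optimality[OF convex_on_imp_convex[OF \<psi>] \<psi>, of a w ?\<phi>])
    show "a \<in> bproj blk k -` S" "w \<in> bproj blk k -` S" using a w by auto
    show "?\<phi> a + ?\<psi> a \<le> ?\<phi> v + ?\<psi> v" if "v \<in> bproj blk k -` S" for v
      using minim that by simp
    show "(?\<phi> has_derivative (\<lambda>d. smooth_grad blk blkp K A dg E q \<rho> (gs_point blk k a a b) y \<bullet> bproj blk k d)) (at a)"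
      by (rule has_derivative_block_objective[OF k]) (rule gd)
  qed
qed

definition gs_grad :: "('n \<Rightarrow> nat) \<Rightarrow> ('p \<Rightarrow> nat) \<Rightarrow> nat \<Rightarrow> real^'n^'p
      \<Rightarrow> (nat \<Rightarrow> real^'p \<Rightarrow> real^'p) \<Rightarrow> real^'n^'m \<Rightarrow> real^'m \<Rightarrow> real
      \<Rightarrow> real^'n \<Rightarrow> real^'n \<Rightarrow> real^'m \<Rightarrow> real^'n" where
  "gs_grad blk blkp K A dg E q \<rho> a b y =
     (\<Sum>k<K. bproj blk k (smooth_grad blk blkp K A dg E q \<rho> (gs_point blk k a a b) y))"

lemma admm_iterate_feasible:
  assumes "admm_seq blk blkp K A g h Dh X E q \<rho> \<alpha> x y" and "k < K" and "1 \<le> r"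
  shows "bproj blk k (x r) \<in> Dh k \<inter> X k"
proof -
  have "x r = x (Suc (r - 1))" using \<open>1 \<le> r\<close> by simp
  then show ?thesis using assms unfolding admm_seq_def by metis
qed

text \<open>Summing the K subproblem optimality conditions: the new iterate satisfies the proximal
  variational inequality with the Gauss-Seidel gradient in place of the true gradient.\<close>

lemma admm_sweep_vi:
  fixes blk :: "'n::finite \<Rightarrow> nat" and blkp :: "'p::finite \<Rightarrow> nat"
    and E :: "real^'n^'m::finite"
  assumes adm: "admm_seq blk blkp K A g h Dh X E q \<rho> \<alpha> x y"
    and h_conv: "\<And>k. k < K \<Longrightarrow> convex_on (Dh k \<inter> X k) (h k)"
    and g_diff: "\<And>k z. k < K \<Longrightarrow> bproj blk k z \<in> X k \<Longrightarrow>
                   (g k has_derivative (\<lambda>d. dg k (Ablk blk blkp A k z) \<bullet> d)) (at (Ablk blk blkp A k z))"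
    and w: "w \<in> hdom blk K Dh X"
  shows "0 \<le> hsum blk K h w - hsum blk K h (x (Suc r))
              + gs_grad blk blkp K A dg E q \<rho> (x (Suc r)) (x r) (y r) \<bullet> (w - x (Suc r))"
proof -
  let ?sg = "\<lambda>k. smooth_grad blk blkp K A dg E q \<rho> (gs_point blk k (x (Suc r)) (x (Suc r)) (x r)) (y r)"
  have block: "0 \<le> h k (bproj blk k w) - h k (bproj blk k (x (Suc r)))
                   + ?sg k \<bullet> bproj blk k (w - x (Suc r))" if k: "k < K" for k
  proof (rule block_subproblem_vi[where h = h and K = K and S = "Dh k \<inter> X k", OF k h_conv[OF k]])
    show "bproj blk k (x (Suc r)) \<in> Dh k \<inter> X k"
      using admm_iterate_feasible[OF adm k, of "Suc r"] by simp
    show "bproj blk k w \<in> Dh k \<inter> X k" using w k by (simp add: hdom_def)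
    show "aug_lag blk blkp K A g h E q \<rho> (gs_point blk k (x (Suc r)) (x (Suc r)) (x r)) (y r)
          \<le> aug_lag blk blkp K A g h E q \<rho> (gs_point blk k (x (Suc r)) u (x r)) (y r)"
      if "bproj blk k u \<in> Dh k \<inter> X k" for u
      using adm k that unfolding admm_seq_def by blast
    show "(g k has_derivative (\<lambda>d. dg k (Ablk blk blkp A k (x (Suc r))) \<bullet> d))
            (at (Ablk blk blkp A k (x (Suc r))))"
      using g_diff[OF k] admm_iterate_feasible[OF adm k, of "Suc r"] by simp
  qed
  have "0 \<le> (\<Sum>k<K. h k (bproj blk k w) - h k (bproj blk k (x (Suc r)))
                     + ?sg k \<bullet> bproj blk k (w - x (Suc r)))"
    using block by (intro sum_nonneg) auto
  also have "\<dots> = hsum blk K h w - hsum blk K h (x (Suc r))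
              + gs_grad blk blkp K A dg E q \<rho> (x (Suc r)) (x r) (y r) \<bullet> (w - x (Suc r))"
    unfolding hsum_def gs_grad_def
    by (simp add: sum.distrib sum_subtractf inner_sum_left inner_bproj)
  finally show ?thesis .
qed

lemma gs_grad_deviation:
  fixes blk :: "'n::finite \<Rightarrow> nat" and E :: "real^'n^'m::finite"
  assumes blocks: "\<forall>i. blk i < K" and \<rho>: "0 \<le> \<rho>" and L: "0 \<le> L"
    and B0_nonneg: "0 \<le> B0" and B0: "\<And>w. norm ((transpose E ** E) *v w) \<le> B0 * norm w"
    and lip: "\<And>k z z'. k < K \<Longrightarrow> bproj blk k z \<in> X k \<Longrightarrow> bproj blk k z' \<in> X k \<Longrightarrow>
        norm (AblkT blk blkp A k (dg k (Ablk blk blkp A k z))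
              - AblkT blk blkp A k (dg k (Ablk blk blkp A k z')))
        \<le> L * norm (bproj blk k z - bproj blk k z')"
    and a: "\<And>k. k < K \<Longrightarrow> bproj blk k a \<in> X k" and b: "\<And>k. k < K \<Longrightarrow> bproj blk k b \<in> X k"
  shows "norm (gs_grad blk blkp K A dg E q \<rho> a b y - smooth_grad blk blkp K A dg E q \<rho> b y)
         \<le> real K * ((L + \<rho> * B0) * norm (a - b))"
proof -
  let ?d = "\<lambda>k. bproj blk k (smooth_grad blk blkp K A dg E q \<rho> (gs_point blk k a a b) y
                            - smooth_grad blk blkp K A dg E q \<rho> b y)"
  have "gs_grad blk blkp K A dg E q \<rho> a b y - smooth_grad blk blkp K A dg E q \<rho> b y
      = gs_grad blk blkp K A dg E q \<rho> a b y
        - (\<Sum>k<K. bproj blk k (smooth_grad blk blkp K A dg E q \<rho> b y))"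
    by (simp only: bproj_sum_blocks[OF blocks])
  also have "\<dots> = (\<Sum>k<K. ?d k)"
    unfolding gs_grad_def by (simp only: bproj_diff sum_subtractf)
  finally have "norm (gs_grad blk blkp K A dg E q \<rho> a b y - smooth_grad blk blkp K A dg E q \<rho> b y)
      = norm (\<Sum>k<K. ?d k)" by (rule arg_cong)
  also have "\<dots> \<le> (\<Sum>k<K. norm (?d k))" by (rule norm_sum)
  also have "\<dots> \<le> (\<Sum>k<K. (L + \<rho> * B0) * norm (a - b))"
  proof (rule sum_mono)
    fix k assume "k \<in> {..<K}"
    then have k: "k < K" by simp
    have "bproj blk k (gs_point blk k a a b) \<in> X k"
      using a[OF k] by (simp add: bproj_gs_point)
    from lip[OF k this b[OF k]]
    have "norm (?d k) \<le> (L + \<rho> * B0) * norm (gs_point blk k a a b - b)"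
      by (rule smooth_grad_block_lipschitz[OF k \<rho> L B0])
    also have "\<dots> \<le> (L + \<rho> * B0) * norm (a - b)"
      using \<rho> L B0_nonneg by (intro mult_left_mono[OF norm_gs_point_le]) simp
    finally show "norm (?d k) \<le> (L + \<rho> * B0) * norm (a - b)" .
  qed
  finally show ?thesis by simp
qed

lemma admm_residual_bound:
  fixes blk :: "'n::finite \<Rightarrow> nat" and blkp :: "'p::finite \<Rightarrow> nat"
    and E :: "real^'n^'m::finite"
  assumes blocks: "\<forall>i. blk i < K" and \<rho>: "0 \<le> \<rho>" and L: "0 \<le> L"
    and B0_nonneg: "0 \<le> B0" and B0: "\<And>w. norm ((transpose E ** E) *v w) \<le> B0 * norm w"
    and h_conv: "\<And>k. k < K \<Longrightarrow> convex_on (Dh k \<inter> X k) (h k)"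
    and prox_exists: "\<forall>v. \<exists>u\<in>hdom blk K Dh X. \<forall>w\<in>hdom blk K Dh X.
        hsum blk K h u + (norm (v - u))\<^sup>2 / 2 \<le> hsum blk K h w + (norm (v - w))\<^sup>2 / 2"
    and g_diff: "\<And>k z. k < K \<Longrightarrow> bproj blk k z \<in> X k \<Longrightarrow>
                   (g k has_derivative (\<lambda>d. dg k (Ablk blk blkp A k z) \<bullet> d)) (at (Ablk blk blkp A k z))"
    and lip: "\<And>k z z'. k < K \<Longrightarrow> bproj blk k z \<in> X k \<Longrightarrow> bproj blk k z' \<in> X k \<Longrightarrow>
        norm (AblkT blk blkp A k (dg k (Ablk blk blkp A k z))
              - AblkT blk blkp A k (dg k (Ablk blk blkp A k z')))
        \<le> L * norm (bproj blk k z - bproj blk k z')"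
    and adm: "admm_seq blk blkp K A g h Dh X E q \<rho> \<alpha> x y" and r: "1 \<le> r"
  shows "norm (prox_grad blk blkp K A dg h Dh X E q \<rho> (x r) (y r))
         \<le> (2 + real K * (L + \<rho> * B0)) * norm (x (Suc r) - x r)"
proof -
  let ?H = "hsum blk K h" and ?D = "hdom blk K Dh X"
  let ?sg = "smooth_grad blk blkp K A dg E q \<rho> (x r) (y r)"
  let ?G = "gs_grad blk blkp K A dg E q \<rho> (x (Suc r)) (x r) (y r)"
  define v where "v = x r - ?sg"
  define p where "p = prox ?D ?H v"
  have D: "convex ?D" and H: "convex_on ?D ?H"
    using convex_hsum[of K Dh X h blk] h_conv by blast+
  note prox = prox_vi[OF D H prox_exists[rule_format, of v], folded p_def]
  have feasible: "bproj blk k (x s) \<in> Dh k \<inter> X k" if "k < K" "1 \<le> s" for k s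
    using admm_iterate_feasible[OF adm that] .
  have "x (Suc r) \<in> ?D" using feasible by (simp add: hdom_def)
  \<comment> \<open>p is close to the new iterate: compare the prox inequality with the sweep inequality.\<close>
  have "norm (p - x (Suc r)) \<le> norm (?G + v - x (Suc r))"
    by (rule distance_bound_from_vis[OF prox(2)[OF \<open>x (Suc r) \<in> ?D\<close>]
          admm_sweep_vi[OF adm h_conv g_diff prox(1)]])
  also have "?G + v - x (Suc r) = (x r - x (Suc r)) + (?G - ?sg)"
    unfolding v_def by (simp add: algebra_simps)
  also have "norm \<dots> \<le> norm (x (Suc r) - x r) + norm (?G - ?sg)"
    using norm_triangle_ineq[of "x r - x (Suc r)" "?G - ?sg"] by (simp add: norm_minus_commute)
  also have "norm (?G - ?sg) \<le> real K * ((L + \<rho> * B0) * norm (x (Suc r) - x r))"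
    by (rule gs_grad_deviation[OF blocks \<rho> L B0_nonneg B0 lip]) (use feasible r in auto)
  finally have close: "norm (p - x (Suc r)) \<le> (1 + real K * (L + \<rho> * B0)) * norm (x (Suc r) - x r)"
    by (simp add: algebra_simps)
  have "prox_grad blk blkp K A dg h Dh X E q \<rho> (x r) (y r) = (x r - x (Suc r)) - (p - x (Suc r))"
    unfolding prox_grad_smooth_grad p_def v_def by simp
  then have "norm (prox_grad blk blkp K A dg h Dh X E q \<rho> (x r) (y r))
      \<le> norm (x (Suc r) - x r) + norm (p - x (Suc r))"
    by (metis norm_minus_commute norm_triangle_ineq4)
  with close show ?thesis by (simp add: algebra_simps)
qed

theorem lemma2p5:
  fixes blk :: "'n::finite \<Rightarrow> nat" and blkp :: "'p::finite \<Rightarrow> nat" and K :: nat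
    and A :: "real^'n^'p" and E :: "real^'n^'m::finite" and q :: "real^'m"
    and g :: "nat \<Rightarrow> real^'p \<Rightarrow> real" and dg :: "nat \<Rightarrow> real^'p \<Rightarrow> real^'p"
    and Dg :: "nat \<Rightarrow> (real^'p) set"
    and h :: "nat \<Rightarrow> real^'n \<Rightarrow> real" and Dh :: "nat \<Rightarrow> (real^'n) set"
    and X :: "nat \<Rightarrow> (real^'n) set"
    and \<rho> \<alpha> L :: real
  assumes blocks: "\<forall>i. blk i < K"
    and rho_pos: "\<rho> > 0" and alpha_pos: "\<alpha> > 0" and L_pos: "L > 0"
    \<comment> \<open>X_k: convex constraint set in the block-k subspace\<close>
    and X_blk: "\<forall>k<K. \<forall>x\<in>X k. bproj blk k x = x"
    and X_convex: "\<forall>k<K. convex (X k)"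
    \<comment> \<open>A(b): h_k convex and continuous on its (block-k) domain\<close>
    and Dh_blk: "\<forall>k<K. \<forall>x\<in>Dh k. bproj blk k x = x"
    and h_convex: "\<forall>k<K. convex (Dh k) \<and> convex_on (Dh k) (h k)"
    and h_cont: "\<forall>k<K. continuous_on (Dh k) (h k)"
    \<comment> \<open>prox_h (h with the constraints absorbed) is well defined\<close>
    and prox_exists: "\<forall>v. \<exists>u\<in>hdom blk K Dh X. \<forall>w\<in>hdom blk K Dh X.
        hsum blk K h u + (norm (v - u))\<^sup>2 / 2 \<le> hsum blk K h w + (norm (v - w))\<^sup>2 / 2"
    \<comment> \<open>g_k is a function of the block-k coordinates of real^'p (cylinder representation)\<close>
    and g_blk: "\<forall>k<K. \<forall>z. g k z = g k (bproj blkp k z)"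
    and Dg_blk: "\<forall>k<K. \<forall>z. z \<in> Dg k \<longleftrightarrow> bproj blkp k z \<in> Dg k"
    \<comment> \<open>A(b): g_k convex and continuous on its domain\<close>
    and g_convex: "\<forall>k<K. convex (Dg k) \<and> convex_on (Dg k) (g k)"
    and g_cont: "\<forall>k<K. continuous_on (Dg k) (g k)"
    \<comment> \<open>A(c): strictly convex, continuously differentiable on the interior of its domain\<close>
    and g_strict: "\<forall>k<K. strictly_convex_on (Dg k \<inter> range (bproj blkp k)) (g k)"
    and g_deriv: "\<forall>k<K. \<forall>z\<in>interior (Dg k). (g k has_derivative (\<lambda>d. dg k z \<bullet> d)) (at z)"
    and dg_cont: "\<forall>k<K. continuous_on (interior (Dg k)) (dg k)"
    \<comment> \<open>gradients in the Lipschitz condition exist on X_k\<close>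
    and AX_int: "\<forall>k<K. \<forall>x. bproj blk k x \<in> X k \<longrightarrow> Ablk blk blkp A k x \<in> interior (Dg k)"
    \<comment> \<open>A(c): Lipschitz condition\<close>
    and lipschitz: "\<forall>k<K. \<forall>x x'. bproj blk k x \<in> X k \<longrightarrow> bproj blk k x' \<in> X k \<longrightarrow>
        norm (AblkT blk blkp A k (dg k (Ablk blk blkp A k x))
              - AblkT blk blkp A k (dg k (Ablk blk blkp A k x')))
        \<le> L * norm (bproj blk k x - bproj blk k x')"
  shows "\<exists>\<sigma>>0. \<forall>x y. admm_seq blk blkp K A g h Dh X E q \<rho> \<alpha> x y \<longrightarrow>
           (\<forall>r\<ge>1. norm (prox_grad blk blkp K A dg h Dh X E q \<rho> (x r) (y r))
                    \<le> \<sigma> * norm (x (Suc r) - x r))"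
proof -
  obtain B0 where B0_pos: "B0 > 0" and B0: "\<And>w. norm ((transpose E ** E) *v w) \<le> B0 * norm w"
    using linear_bounded_pos[OF matrix_vector_mul_linear[of "transpose E ** E"]] by blast
  have h_conv: "convex_on (Dh k \<inter> X k) (h k)" if "k < K" for k
    using h_convex X_convex that by (meson convex_Int convex_on_subset inf_le1)
  have g_diff: "(g k has_derivative (\<lambda>d. dg k (Ablk blk blkp A k z) \<bullet> d)) (at (Ablk blk blkp A k z))"
    if "k < K" "bproj blk k z \<in> X k" for k z
    using g_deriv AX_int that by blast
  show ?thesis
  proof (intro exI[of _ "2 + real K * (L + \<rho> * B0)"] conjI allI impI)
    show "0 < 2 + real K * (L + \<rho> * B0)"
      using L_pos rho_pos B0_pos by (simp add: add_pos_nonneg)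
    fix x y and r :: nat assume adm: "admm_seq blk blkp K A g h Dh X E q \<rho> \<alpha> x y" and r: "1 \<le> r"
    show "norm (prox_grad blk blkp K A dg h Dh X E q \<rho> (x r) (y r))
          \<le> (2 + real K * (L + \<rho> * B0)) * norm (x (Suc r) - x r)"
    proof (rule admm_residual_bound[OF blocks _ _ _ B0 h_conv prox_exists g_diff _ adm r])
      show "0 \<le> \<rho>" "0 \<le> L" "0 \<le> B0" using rho_pos L_pos B0_pos by simp_all
    qed (use lipschitz in blast)+
  qed
qed

end
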